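(* Assume the index vectors $\mathbf v_1,\dots,\mathbf v_k\in\mathbb R^d$ are orthonormal. Let $\mathbf w(t)$ solve $\frac{d}{dt}\mathbf w=-(I_d-\mathbf w\mathbf w^T)\nabla L(\mathbf w)$ from a unit vector $\mathbf w(0)$ and let $\mathbf u_j(t)=\mathbf v_j^T\mathbf w(t)$. Let $\ell\in[k]$ and $I=[k]\setminus[\ell]$. (a) Assume $\mathbf u_j(0)>0$ for all $j\in[k]$ and $\mathbf u_1(0)=\dots=\mathbf u_\ell(0)>\max_{j\in I}\mathbf u_j(0)$. If $\sigma^*$ has information exponent $p^*\ge3$, then $\lim_{t\to\infty}\mathbf u_j(t)=1/\sqrt{\ell}$ for $j\in[\ell]$ and $\lim_{t\to\infty}\mathbf u_j(t)=0$ for $j\in I$. (b) If $\sigma^*$ is even with information exponent $p^*\ge4$, and $|\mathbf u_1(0)|=\dots=|\mathbf u_\ell(0)|>\max_{j\in I}|\mathbf u_j(0)|$, then $\lim_{t\to\infty}\mathbf u_j(t)=\operatorname{sgn}(\mathbf u_j(0))/\sqrt{\ell}$ for $j\in[\ell]$ and $\lim_{t\to\infty}\mathbf u_j(t)=0$ for $j\in I$.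
   Context: Let $h_p$ be the probabilist's Hermite polynomials normalized to be orthonormal in $L^2$ of the standard Gaussian measure. Let $\sigma,\sigma^*:\mathbb R\to\mathbb R$ be square integrable w.r.t. the standard Gaussian, with $\sigma=\sum_{p\ge1}a_ph_p$, $\sigma^*=\sum_{p\ge1}b_ph_p$; the information exponent is $p^*=\min\{p:b_p\neq0\}$ and $c_p=a_pb_p$. Standing assumptions: $c_{p^*}>0$, $c_p\ge0$ for all $p\ge p^*$, and $\sum_{p\ge p^*}c_p\,p<\infty$. The loss is $L(\mathbf w)=C-\mathbb E_{\mathbf x\sim\mathcal N(0,I_d)}\big[\sigma(\mathbf w^T\mathbf x)\sum_{j=1}^k\sigma^*(\mathbf v_j^T\mathbf x)\big]$, which for unit $\mathbf w$ equals $C-\sum_{p\ge p^*}c_p\sum_j(\mathbf v_j^T\mathbf w)^p$; this formula defines $L$ and its Euclidean gradient $\nabla L$ on $\mathbb R^d$. *)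

theory Defs
  imports "HOL-Probability.Probability"
begin

fun hermite_prob :: "nat \<Rightarrow> real \<Rightarrow> real" where
  "hermite_prob 0 x = 1"
| "hermite_prob (Suc 0) x = x"
| "hermite_prob (Suc (Suc n)) x = x * hermite_prob (Suc n) x - real (Suc n) * hermite_prob n x"

(* normalized Hermite polynomials h_p = He_p / sqrt(p!), orthonormal in L^2(N(0,1)) *)
definition hermite_h :: "nat \<Rightarrow> real \<Rightarrow> real" where
  "hermite_h p x = hermite_prob p x / sqrt (fact p)"

definition gauss_L2 :: "(real \<Rightarrow> real) \<Rightarrow> bool" where
  "gauss_L2 f \<longleftrightarrow> f \<in> borel_measurable borel \<and>
     integrable lborel (\<lambda>x. (f x)\<^sup>2 * std_normal_density x)"

(* Hermite coefficient: f = sum_p (hcoeff f p) h_p in L^2(N(0,1)) *)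
definition hcoeff :: "(real \<Rightarrow> real) \<Rightarrow> nat \<Rightarrow> real" where
  "hcoeff f p = (LINT x|lborel. f x * hermite_h p x * std_normal_density x)"

definition info_exp :: "(real \<Rightarrow> real) \<Rightarrow> nat" where
  "info_exp f = (LEAST p. hcoeff f p \<noteq> 0)"

definition ccoef :: "(real \<Rightarrow> real) \<Rightarrow> (real \<Rightarrow> real) \<Rightarrow> nat \<Rightarrow> real" where
  "ccoef \<sigma> \<sigma>s p = hcoeff \<sigma> p * hcoeff \<sigma>s p"

definition loss :: "real \<Rightarrow> (real \<Rightarrow> real) \<Rightarrow> (real \<Rightarrow> real) \<Rightarrow> nat \<Rightarrow> (nat \<Rightarrow> real^'d)
     \<Rightarrow> real^'d \<Rightarrow> real" where
  "loss C \<sigma> \<sigma>s k v w = C - (\<Sum>p. ccoef \<sigma> \<sigma>s p * (\<Sum>j\<in>{1..k}. (v j \<bullet> w) ^ p))"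

(* Euclidean gradient of the formula above:
   grad L(w) = - sum_p c_p p sum_j (v_j^T w)^(p-1) v_j *)
definition loss_grad :: "(real \<Rightarrow> real) \<Rightarrow> (real \<Rightarrow> real) \<Rightarrow> nat \<Rightarrow> (nat \<Rightarrow> real^'d)
     \<Rightarrow> real^'d \<Rightarrow> real^'d" where
  "loss_grad \<sigma> \<sigma>s k v w =
     - (\<Sum>p. (ccoef \<sigma> \<sigma>s p * real p) *\<^sub>R (\<Sum>j\<in>{1..k}. ((v j \<bullet> w) ^ (p - 1)) *\<^sub>R v j))"

definition standing_assms :: "(real \<Rightarrow> real) \<Rightarrow> (real \<Rightarrow> real) \<Rightarrow> bool" where
  "standing_assms \<sigma> \<sigma>s \<longleftrightarrow>
     gauss_L2 \<sigma> \<and> gauss_L2 \<sigma>s \<and>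
     hcoeff \<sigma> 0 = 0 \<and> hcoeff \<sigma>s 0 = 0 \<and>
     ccoef \<sigma> \<sigma>s (info_exp \<sigma>s) > 0 \<and>
     (\<forall>p\<ge>info_exp \<sigma>s. ccoef \<sigma> \<sigma>s p \<ge> 0) \<and>
     summable (\<lambda>p. ccoef \<sigma> \<sigma>s p * real p)"

end

theory Submission
  imports Defs "HOL-Real_Asymp.Real_Asymp"
begin

text \<open>
  Orthonormality turns the flow into a closed system for the overlaps u_j = v_j \<bullet> w:
  u_j' = u_j (G(u_j) - S) with G(u) = \<Sum>_p c_p p u^(p-2) and S = \<Sum>_i u_i^2 G(u_i), while w
  stays on the unit sphere. For p* \<ge> 3, G is bounded on [-1,1], u G(u) is Lipschitz on
  [-4/5,4/5], and G(y) - G(x) \<ge> c_p* p* (y^(p*-2) - x^(p*-2)) for 0 \<le> x \<le> y \<le> 1.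
  Uniqueness of solutions keeps the top l overlaps equal to u_1, and the others stay in [0, u_1).
  Hence u_1 is nondecreasing, each ratio u_i/u_1 with i > l decays exponentially, and the mass
  q = 1 - \<Sum>_j u_j^2 outside the span of the v_j obeys q' = -2 S q with S \<ge> c_p* p* u_1(0)^(p*+2),
  so l u_1^2 tends to 1. If \<sigma>* is even, only even p contribute, G is even, and flipping the
  signs of the overlaps reduces (b) to nonnegative initial overlaps; there, p* \<ge> 3 already suffices.
\<close>

section \<open>Differential inequalities\<close>

lemma has_real_derivative_imp_continuous_on_atLeast:
  assumes "\<And>t. t \<ge> 0 \<Longrightarrow> (f has_real_derivative f' t) (at t within {0..})"
  shows "continuous_on {0..} f"
  using assms by (metis DERIV_continuous atLeast_iff continuous_on_eq_continuous_within)

lemma nonpos_derivative_imp_decreasing: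
  fixes f :: "real \<Rightarrow> real"
  assumes "0 \<le> a" "a \<le> b"
    and deriv: "\<And>t. a \<le> t \<Longrightarrow> t \<le> b \<Longrightarrow> (f has_real_derivative f' t) (at t within {0..})"
    and nonpos: "\<And>t. a \<le> t \<Longrightarrow> t \<le> b \<Longrightarrow> f' t \<le> 0"
  shows "f b \<le> f a"
proof (rule DERIV_nonpos_imp_decreasing_open[OF \<open>a \<le> b\<close>])
  fix t assume t: "a < t" "t < b"
  have "at t within {0..} = at t"
    by (rule at_within_open_subset[of _ "{0<..}"]) (use t \<open>0 \<le> a\<close> in auto)
  then show "\<exists>y. (f has_real_derivative y) (at t) \<and> y \<le> 0"
    using deriv[of t] nonpos[of t] t by auto
next
  have "continuous (at t within {a..b}) f" if "t \<in> {a..b}" for t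
    using deriv[of t] that DERIV_continuous continuous_within_subset[of t "{0..}" f "{a..b}"]
      \<open>0 \<le> a\<close> by auto
  then show "continuous_on {a..b} f"
    by (simp add: continuous_on_eq_continuous_within)
qed

lemma gronwall_exp_bound:
  fixes x :: "real \<Rightarrow> real"
  assumes "0 \<le> a" "a \<le> b"
    and deriv: "\<And>t. a \<le> t \<Longrightarrow> t \<le> b \<Longrightarrow> (x has_real_derivative x' t) (at t within {0..})"
    and growth: "\<And>t. a \<le> t \<Longrightarrow> t \<le> b \<Longrightarrow> x' t \<le> C * x t"
  shows "x b \<le> x a * exp (C * (b - a))"
proof -
  have "x b * exp (- C * b) \<le> x a * exp (- C * a)"
  proof (rule nonpos_derivative_imp_decreasing[OF assms(1,2)])
    fix t assume t: "a \<le> t" "t \<le> b"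
    have "((\<lambda>t. exp (- C * t)) has_real_derivative exp (- C * t) * (- C)) (at t within {0..})"
      by (rule derivative_eq_intros refl | simp)+
    from DERIV_mult[OF deriv[OF t] this]
    show "((\<lambda>t. x t * exp (- C * t)) has_real_derivative (x' t - C * x t) * exp (- C * t))
        (at t within {0..})"
      by (simp add: algebra_simps)
    show "(x' t - C * x t) * exp (- C * t) \<le> 0"
      using growth[OF t] by (simp add: mult_nonpos_nonneg)
  qed
  then have "x b * exp (- C * b) * exp (C * b) \<le> x a * exp (- C * a) * exp (C * b)"
    by simp
  then show ?thesis
    by (simp add: mult.assoc right_diff_distrib flip: exp_add)
qed

lemma square_gronwall_bounds:
  fixes f :: "real \<Rightarrow> real"
  assumes "0 \<le> a" "a \<le> b"
    and deriv: "\<And>t. a \<le> t \<Longrightarrow> t \<le> b \<Longrightarrow> (f has_real_derivative f' t) (at t within {0..})"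
    and bound: "\<And>t. a \<le> t \<Longrightarrow> t \<le> b \<Longrightarrow> \<bar>f' t\<bar> \<le> C * \<bar>f t\<bar>"
  shows "(f a)\<^sup>2 * exp (- (2 * C) * (b - a)) \<le> (f b)\<^sup>2"
    and "(f b)\<^sup>2 \<le> (f a)\<^sup>2 * exp (2 * C * (b - a))"
proof -
  have sq: "((\<lambda>t. (f t)\<^sup>2) has_real_derivative 2 * f t * f' t) (at t within {0..})"
    if "a \<le> t" "t \<le> b" for t
    using DERIV_mult[OF deriv[OF that] deriv[OF that]] by (simp add: power2_eq_square algebra_simps)
  have est: "\<bar>2 * f t * f' t\<bar> \<le> 2 * C * (f t)\<^sup>2" if "a \<le> t" "t \<le> b" for t
  proof -
    have "\<bar>2 * f t * f' t\<bar> = 2 * \<bar>f t\<bar> * \<bar>f' t\<bar>" by (simp add: abs_mult)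
    also have "\<dots> \<le> 2 * \<bar>f t\<bar> * (C * \<bar>f t\<bar>)"
      using bound[OF that] by (intro mult_left_mono) auto
    finally show ?thesis by (simp add: power2_eq_square abs_mult_self_eq algebra_simps)
  qed
  have "- (f b)\<^sup>2 \<le> - (f a)\<^sup>2 * exp (- (2 * C) * (b - a))"
  proof (rule gronwall_exp_bound[OF assms(1,2)])
    fix t assume t: "a \<le> t" "t \<le> b"
    show "((\<lambda>t. - (f t)\<^sup>2) has_real_derivative - (2 * f t * f' t)) (at t within {0..})"
      using DERIV_minus[OF sq[OF t]] .
    show "- (2 * f t * f' t) \<le> - (2 * C) * - (f t)\<^sup>2"
      using est[OF t] by simp
  qed
  then show "(f a)\<^sup>2 * exp (- (2 * C) * (b - a)) \<le> (f b)\<^sup>2"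
    by simp
  show "(f b)\<^sup>2 \<le> (f a)\<^sup>2 * exp (2 * C * (b - a))"
  proof (rule gronwall_exp_bound[OF assms(1,2) sq])
    fix t assume "a \<le> t" "t \<le> b"
    then show "2 * f t * f' t \<le> 2 * C * (f t)\<^sup>2"
      using est[of t] by (simp add: abs_le_iff)
  qed
qed

lemma continuous_within_atLeast_right_bound:
  fixes f :: "real \<Rightarrow> 'a::real_normed_vector"
  assumes "continuous (at \<tau> within {0..}) f" "\<tau> \<ge> 0" "norm (f \<tau>) < r"
  shows "\<exists>\<epsilon>>0. \<forall>t\<in>{\<tau>..\<tau>+\<epsilon>}. norm (f t) \<le> r"
proof -
  obtain d where d: "d > 0" "\<And>t. t \<in> {0..} \<Longrightarrow> dist t \<tau> < d \<Longrightarrow> dist (f t) (f \<tau>) < r - norm (f \<tau>)"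
    using assms(1,3) unfolding continuous_within_eps_delta by (metis diff_gt_0_iff_gt)
  have "norm (f t) \<le> r" if "t \<in> {\<tau>..\<tau> + d/2}" for t
  proof -
    have "dist (f t) (f \<tau>) < r - norm (f \<tau>)"
      using d that assms(2) by (auto simp: dist_real_def)
    then show ?thesis
      using norm_triangle_sub[of "f t" "f \<tau>"] by (simp add: dist_norm)
  qed
  then show ?thesis
    using d(1) by (intro exI[of _ "d/2"]) auto
qed

lemma vanishing_persists:
  fixes f :: "real \<Rightarrow> real"
  assumes deriv: "\<And>t. t \<ge> 0 \<Longrightarrow> (f has_real_derivative f' t) (at t within {0..})"
    and "f 0 = 0"
    and local_bound: "\<And>\<tau>. \<tau> \<ge> 0 \<Longrightarrow> f \<tau> = 0 \<Longrightarrow>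
      \<exists>\<epsilon>>0. \<exists>C. \<forall>t\<in>{\<tau>..\<tau>+\<epsilon>}. \<bar>f' t\<bar> \<le> C * \<bar>f t\<bar>"
    and "t \<ge> 0"
  shows "f t = 0"
proof (rule ccontr)
  assume "f t \<noteq> 0"
  let ?Z = "{0..t} \<inter> f -` {0}"
  have "continuous_on {0..t} f"
    using has_real_derivative_imp_continuous_on_atLeast[OF deriv]
    by (rule continuous_on_subset) auto
  then have "closed ?Z"
    by (rule continuous_closed_preimage) auto
  moreover have "?Z \<noteq> {}" "bdd_above ?Z"
    using \<open>f 0 = 0\<close> \<open>t \<ge> 0\<close> by auto
  ultimately have "Sup ?Z \<in> ?Z"
    by (intro closed_contains_Sup)
  then obtain \<tau> where \<tau>: "\<tau> = Sup ?Z" "0 \<le> \<tau>" "\<tau> \<le> t" "f \<tau> = 0"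
    by auto
  obtain \<epsilon> C where \<epsilon>: "\<epsilon> > 0" "\<forall>s\<in>{\<tau>..\<tau>+\<epsilon>}. \<bar>f' s\<bar> \<le> C * \<bar>f s\<bar>"
    using local_bound[OF \<tau>(2,4)] by blast
  define t' where "t' = min (\<tau> + \<epsilon>) t"
  have "(f t')\<^sup>2 \<le> (f \<tau>)\<^sup>2 * exp (2 * C * (t' - \<tau>))"
    by (rule square_gronwall_bounds(2)[OF \<tau>(2), where f' = f'])
      (use \<tau> \<epsilon> deriv in \<open>auto simp: t'_def\<close>)
  then have "t' \<in> ?Z"
    using \<tau> \<epsilon> \<open>t \<ge> 0\<close> by (auto simp: t'_def)
  then have "t' \<le> \<tau>"
    unfolding \<tau>(1) by (rule cSup_upper) (use \<open>bdd_above ?Z\<close> in auto)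
  then have "t' = t"
    using \<epsilon>(1) \<tau>(3) by (auto simp: t'_def min_def split: if_splits)
  with \<open>t' \<in> ?Z\<close> \<open>f t \<noteq> 0\<close> show False
    by auto
qed

lemma positivity_persists:
  fixes f :: "real \<Rightarrow> real"
  assumes cont: "continuous_on {0..} f" and "f 0 > 0"
    and step: "\<And>\<tau>. \<tau> \<ge> 0 \<Longrightarrow> (\<forall>t\<in>{0..\<tau>}. f t \<ge> 0) \<Longrightarrow> f \<tau> > 0"
    and "t \<ge> 0"
  shows "f t > 0"
proof (rule ccontr)
  assume "\<not> f t > 0"
  let ?Z = "{0..t} \<inter> f -` {..0}"
  have "continuous_on {0..t} f"
    using cont by (rule continuous_on_subset) auto
  then have "closed ?Z"
    by (rule continuous_closed_preimage) auto
  moreover have "?Z \<noteq> {}" "bdd_below ?Z"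
    using \<open>\<not> f t > 0\<close> \<open>t \<ge> 0\<close> by auto
  ultimately have "Inf ?Z \<in> ?Z"
    by (intro closed_contains_Inf)
  then obtain \<tau> where \<tau>: "\<tau> = Inf ?Z" "0 \<le> \<tau>" "\<tau> \<le> t" "f \<tau> \<le> 0"
    by auto
  have before: "f s > 0" if "0 \<le> s" "s < \<tau>" for s
  proof (rule ccontr)
    assume "\<not> f s > 0"
    then have "s \<in> ?Z" using that \<tau> by auto
    then have "\<tau> \<le> s" unfolding \<tau>(1) by (rule cInf_lower) (use \<open>bdd_below ?Z\<close> in auto)
    with that show False by simp
  qed
  have "f \<tau> \<ge> 0"
  proof -
    have "continuous_on {0..\<tau>} f"
      using cont by (rule continuous_on_subset) auto
    then obtain s where s: "0 \<le> s" "s \<le> \<tau>" "f s = 0"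
      using IVT2'[of f \<tau> 0 0] \<tau> \<open>f 0 > 0\<close> by force
    then have "s = \<tau>" using before by force
    with s show ?thesis by simp
  qed
  then have "\<forall>s\<in>{0..\<tau>}. f s \<ge> 0"
    using before by (auto simp: le_less)
  from step[OF \<tau>(2) this] \<tau> show False by simp
qed

section \<open>Power series and Hermite coefficients\<close>

lemma abs_power_diff_le:
  fixes x y r :: real
  assumes "\<bar>x\<bar> \<le> r" "\<bar>y\<bar> \<le> r"
  shows "\<bar>x ^ n - y ^ n\<bar> \<le> real n * r ^ (n - 1) * \<bar>x - y\<bar>"
proof -
  have "\<bar>\<Sum>i<n. y ^ (n - Suc i) * x ^ i\<bar> \<le> (\<Sum>i<n. \<bar>y\<bar> ^ (n - Suc i) * \<bar>x\<bar> ^ i)"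
    by (rule order_trans[OF sum_abs]) (simp add: abs_mult power_abs)
  also have "\<dots> \<le> (\<Sum>i<n. r ^ (n - Suc i) * r ^ i)"
    using assms by (intro sum_mono mult_mono power_mono) auto
  also have "\<dots> = real n * r ^ (n - 1)"
    by (simp flip: power_add)
  finally have "\<bar>x - y\<bar> * \<bar>\<Sum>i<n. y ^ (n - Suc i) * x ^ i\<bar> \<le> \<bar>x - y\<bar> * (real n * r ^ (n - 1))"
    by (rule mult_left_mono) simp
  then show ?thesis
    by (simp add: power_diff_sumr2 abs_mult mult.commute)
qed

lemma summable_Suc_mult_power: "\<bar>r::real\<bar> < 1 \<Longrightarrow> summable (\<lambda>n. real (Suc n) * r ^ n)"
  using termdiff_converges[of r 1 "\<lambda>_. 1"] by (simp add: diffs_def)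

lemma suminf_not_summable: "\<not> summable f \<Longrightarrow> suminf f = (THE s. False)"
proof -
  assume "\<not> summable f"
  then have "(\<lambda>s. f sums s) = (\<lambda>s. False)"
    unfolding summable_def by auto
  then show ?thesis
    unfolding suminf_def by simp
qed

text \<open>Either the series converges on some \<open>[-1-\<delta>, 1+\<delta>]\<close>, or it diverges everywhere outside
  \<open>[-1, 1]\<close>, because convergence at \<open>u\<close> forces absolute convergence inside \<open>\<bar>u\<bar>\<close>.\<close>

lemma nonneg_powser_bounded_beyond_1:
  fixes a :: "nat \<Rightarrow> real"
  assumes nonneg: "\<And>n. 0 \<le> a n" and "summable a"
  shows "\<exists>\<delta>>0. \<exists>M\<ge>0. \<forall>u. \<bar>u\<bar> \<le> 1 + \<delta> \<longrightarrow> summable (\<lambda>n. a n * u ^ n) \<longrightarrow>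
           \<bar>\<Sum>n. a n * u ^ n\<bar> \<le> M"
proof (cases "\<exists>\<delta>>0. summable (\<lambda>n. a n * (1 + \<delta>) ^ n)")
  case True
  then obtain \<delta> where "\<delta> > 0" and summable_\<delta>: "summable (\<lambda>n. a n * (1 + \<delta>) ^ n)"
    by blast
  have "\<bar>\<Sum>n. a n * u ^ n\<bar> \<le> (\<Sum>n. a n * (1 + \<delta>) ^ n)" if "\<bar>u\<bar> \<le> 1 + \<delta>" for u
    using norm_suminf_le[OF _ summable_\<delta>, of "\<lambda>n. a n * u ^ n"] nonneg that
    by (simp add: abs_mult power_abs mult_left_mono power_mono)
  moreover have "0 \<le> (\<Sum>n. a n * (1 + \<delta>) ^ n)"
    using nonneg \<open>\<delta> > 0\<close> by (intro suminf_nonneg summable_\<delta>) auto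
  ultimately show ?thesis
    using \<open>\<delta> > 0\<close> by blast
next
  case False
  have "\<bar>\<Sum>n. a n * u ^ n\<bar> \<le> (\<Sum>n. a n)" if "summable (\<lambda>n. a n * u ^ n)" for u
  proof -
    have "\<bar>u\<bar> \<le> 1"
    proof (rule ccontr)
      assume "\<not> \<bar>u\<bar> \<le> 1"
      then have "norm (1 + (\<bar>u\<bar> - 1) / 2) < norm u"
        by (auto simp: field_simps)
      from powser_insidea[OF that this]
      have "summable (\<lambda>n. a n * (1 + (\<bar>u\<bar> - 1) / 2) ^ n)"
        using nonneg \<open>\<not> \<bar>u\<bar> \<le> 1\<close> by (simp add: abs_mult)
      with False \<open>\<not> \<bar>u\<bar> \<le> 1\<close> show False
        by (metis diff_gt_0_iff_gt half_gt_zero linorder_not_le)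
    qed
    then have "norm (a n * u ^ n) \<le> a n" for n
      using nonneg[of n] by (simp add: abs_mult power_abs power_le_one mult_left_le)
    from norm_suminf_le[OF this \<open>summable a\<close>] show ?thesis
      by simp
  qed
  moreover have "0 \<le> (\<Sum>n. a n)"
    using nonneg \<open>summable a\<close> by (intro suminf_nonneg) auto
  ultimately show ?thesis
    by (intro exI[of _ 1]) auto
qed

lemma hermite_prob_minus: "hermite_prob n (- x) = (-1) ^ n * hermite_prob n x"
  by (induction n x rule: hermite_prob.induct) (auto simp: algebra_simps)

lemma hcoeff_odd_eq_0:
  assumes even: "\<And>x. f (- x) = f x" and "odd p"
  shows "hcoeff f p = 0"
proof -
  define g where "g x = f x * hermite_h p x * std_normal_density x" for x
  have g_odd: "g (- x) = - g x" for x
    unfolding g_def hermite_h_def using even \<open>odd p\<close>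
    by (simp add: hermite_prob_minus std_normal_density_def)
  have "(LINT x|lborel. g x) = \<bar>-1::real\<bar> *\<^sub>R (LINT x|lborel. g (0 + (-1) * x))"
    by (rule lborel_integral_real_affine) simp
  also have "\<dots> = - (LINT x|lborel. g x)"
    by (simp add: g_odd)
  finally show ?thesis
    unfolding hcoeff_def g_def by simp
qed

section \<open>The overlap dynamics\<close>

text \<open>\<open>U j t\<close> plays the role of the overlap u_j(t), while \<open>c0\<close> and \<open>m\<close> stand for c_p* p* and
  p* - 2. The Lipschitz bound is only required on [-4/5, 4/5]: where two overlaps coincide, the bound
  on their squares forces both below 1/sqrt 2.\<close>

locale overlap_flow =
  fixes K c0 L :: real and m k :: nat and G :: "real \<Rightarrow> real"
    and U :: "nat \<Rightarrow> real \<Rightarrow> real" and S :: "real \<Rightarrow> real"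
  assumes G_bounded: "\<And>u. \<bar>u\<bar> \<le> 1 \<Longrightarrow> \<bar>G u\<bar> \<le> K"
    and G_increment: "\<And>x y. 0 \<le> x \<Longrightarrow> x \<le> y \<Longrightarrow> y \<le> 1 \<Longrightarrow> G x + c0 * (y ^ m - x ^ m) \<le> G y"
    and G_0_nonneg: "0 \<le> G 0"
    and c0_pos: "0 < c0" and m_pos: "1 \<le> m"
    and mult_G_lipschitz: "\<And>x y. \<bar>x\<bar> \<le> 4/5 \<Longrightarrow> \<bar>y\<bar> \<le> 4/5 \<Longrightarrow>
      \<bar>x * G x - y * G y\<bar> \<le> L * \<bar>x - y\<bar>"
    and S_eq: "\<And>t. S t = (\<Sum>j\<in>{1..k}. (U j t)\<^sup>2 * G (U j t))"
    and U_deriv: "\<And>j t. j \<in> {1..k} \<Longrightarrow> t \<ge> 0 \<Longrightarrow>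
      (U j has_real_derivative U j t * (G (U j t) - S t)) (at t within {0..})"
    and sum_squares_le_1: "\<And>t. t \<ge> 0 \<Longrightarrow> (\<Sum>j\<in>{1..k}. (U j t)\<^sup>2) \<le> 1"
begin

lemma abs_U_le_1:
  assumes "j \<in> {1..k}" "t \<ge> 0"
  shows "\<bar>U j t\<bar> \<le> 1"
proof -
  have "(U j t)\<^sup>2 \<le> (\<Sum>i\<in>{1..k}. (U i t)\<^sup>2)"
    by (rule member_le_sum) (use assms in auto)
  also have "\<dots> \<le> 1"
    using sum_squares_le_1 assms by auto
  finally show ?thesis
    by (simp add: abs_square_le_1)
qed

lemma abs_S_le:
  assumes "t \<ge> 0"
  shows "\<bar>S t\<bar> \<le> K"
proof -
  have "\<bar>S t\<bar> \<le> (\<Sum>j\<in>{1..k}. \<bar>(U j t)\<^sup>2 * G (U j t)\<bar>)"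
    unfolding S_eq by (rule sum_abs)
  also have "\<dots> \<le> (\<Sum>j\<in>{1..k}. (U j t)\<^sup>2 * K)"
    using G_bounded abs_U_le_1 assms by (intro sum_mono) (simp add: abs_mult mult_left_mono)
  also have "\<dots> = K * (\<Sum>j\<in>{1..k}. (U j t)\<^sup>2)"
    by (simp add: sum_distrib_left mult.commute)
  also have "\<dots> \<le> K"
    using sum_squares_le_1[OF assms] G_bounded[of 0] by (simp add: mult_left_le)
  finally show ?thesis .
qed

lemma G_ge_power: "0 \<le> y \<Longrightarrow> y \<le> 1 \<Longrightarrow> c0 * y ^ m \<le> G y"
  using G_increment[of 0 y] G_0_nonneg m_pos by (simp add: zero_power)

lemma G_nonneg: "0 \<le> y \<Longrightarrow> y \<le> 1 \<Longrightarrow> 0 \<le> G y"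
  using G_ge_power c0_pos by (meson order.trans mult_nonneg_nonneg less_imp_le zero_le_power)

lemma G_mono: "0 \<le> x \<Longrightarrow> x \<le> y \<Longrightarrow> y \<le> 1 \<Longrightarrow> G x \<le> G y"
  using G_increment[of x y] c0_pos power_mono[of x y m] by (smt (verit) mult_nonneg_nonneg)

lemma U_continuous: "j \<in> {1..k} \<Longrightarrow> continuous_on {0..} (U j)"
  by (rule has_real_derivative_imp_continuous_on_atLeast) (use U_deriv in blast)

lemma abs_U_deriv_le:
  assumes "j \<in> {1..k}" "t \<ge> 0"
  shows "\<bar>U j t * (G (U j t) - S t)\<bar> \<le> 2 * K * \<bar>U j t\<bar>"
proof -
  have "\<bar>G (U j t) - S t\<bar> \<le> 2 * K"
    using G_bounded[OF abs_U_le_1[OF assms]] abs_S_le[OF assms(2)] by linarith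
  then show ?thesis
    by (simp add: abs_mult mult_left_mono mult.commute)
qed

lemma zero_overlap_stays_zero:
  assumes j: "j \<in> {1..k}" and "U j 0 = 0" "t \<ge> 0"
  shows "U j t = 0"
  using U_deriv[OF j] \<open>U j 0 = 0\<close> _ \<open>t \<ge> 0\<close>
proof (rule vanishing_persists)
  show "\<exists>\<epsilon>>0. \<exists>C. \<forall>s\<in>{\<tau>..\<tau>+\<epsilon>}. \<bar>U j s * (G (U j s) - S s)\<bar> \<le> C * \<bar>U j s\<bar>"
    if "\<tau> \<ge> 0" for \<tau>
    using abs_U_deriv_le[OF j] that by (intro exI[of _ 1] conjI exI[of _ "2 * K"]) auto
qed

lemma positive_overlap_stays_positive:
  assumes j: "j \<in> {1..k}" and "U j 0 > 0" "t \<ge> 0"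
  shows "U j t > 0"
  using U_continuous[OF j] \<open>U j 0 > 0\<close> _ \<open>t \<ge> 0\<close>
proof (rule positivity_persists)
  fix \<tau> :: real assume "\<tau> \<ge> 0" "\<forall>s\<in>{0..\<tau>}. U j s \<ge> 0"
  have "(U j 0)\<^sup>2 * exp (- (2 * (2 * K)) * (\<tau> - 0)) \<le> (U j \<tau>)\<^sup>2"
    by (rule square_gronwall_bounds(1)[OF order_refl \<open>\<tau> \<ge> 0\<close> U_deriv[OF j]])
      (use abs_U_deriv_le[OF j] in auto)
  moreover have "0 < (U j 0)\<^sup>2 * exp (- (2 * (2 * K)) * (\<tau> - 0))"
    using \<open>U j 0 > 0\<close> by simp
  ultimately show "U j \<tau> > 0"
    using \<open>\<forall>s\<in>{0..\<tau>}. U j s \<ge> 0\<close> \<open>\<tau> \<ge> 0\<close> by (force simp: le_less)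
qed

lemma zero_overlap_tendsto_0:
  assumes "j \<in> {1..k}" "U j 0 = 0"
  shows "(U j \<longlongrightarrow> 0) at_top"
proof (rule Lim_transform_eventually[OF tendsto_const])
  show "\<forall>\<^sub>F t in at_top. 0 = U j t"
    using eventually_ge_at_top[of 0] by eventually_elim (simp add: zero_overlap_stays_zero[OF assms])
qed

lemma off_span_mass_has_derivative:
  assumes "t \<ge> 0"
  shows "((\<lambda>t. 1 - (\<Sum>j\<in>{1..k}. (U j t)\<^sup>2)) has_real_derivative
    - 2 * S t * (1 - (\<Sum>j\<in>{1..k}. (U j t)\<^sup>2))) (at t within {0..})"
proof -
  have "((\<lambda>t. (U j t)\<^sup>2) has_real_derivative 2 * (U j t)\<^sup>2 * (G (U j t) - S t)) (at t within {0..})"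
    if "j \<in> {1..k}" for j
    using DERIV_mult[OF U_deriv[OF that assms] U_deriv[OF that assms]]
    by (simp add: power2_eq_square algebra_simps)
  then have "((\<lambda>t. \<Sum>j\<in>{1..k}. (U j t)\<^sup>2) has_real_derivative
      (\<Sum>j\<in>{1..k}. 2 * (U j t)\<^sup>2 * (G (U j t) - S t))) (at t within {0..})"
    by (intro DERIV_sum)
  from DERIV_diff[OF DERIV_const[of 1] this]
  have "((\<lambda>t. 1 - (\<Sum>j\<in>{1..k}. (U j t)\<^sup>2)) has_real_derivative
      - (\<Sum>j\<in>{1..k}. 2 * (U j t)\<^sup>2 * (G (U j t) - S t))) (at t within {0..})"
    by simp
  moreover have "(\<Sum>j\<in>{1..k}. 2 * (U j t)\<^sup>2 * (G (U j t) - S t)) =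
      2 * (\<Sum>j\<in>{1..k}. (U j t)\<^sup>2 * G (U j t)) - 2 * S t * (\<Sum>j\<in>{1..k}. (U j t)\<^sup>2)"
    by (simp add: sum_subtractf sum_distrib_left algebra_simps)
  ultimately show ?thesis
    by (simp only: S_eq[symmetric]) (simp add: algebra_simps)
qed

lemma coinciding_overlaps_local_lipschitz:
  assumes i: "i \<in> {1..k}" and j: "j \<in> {1..k}" and "i \<noteq> j" "\<tau> \<ge> 0" "U i \<tau> = U j \<tau>"
  shows "\<exists>\<epsilon>>0. \<forall>s\<in>{\<tau>..\<tau>+\<epsilon>}. \<bar>U i s * (G (U i s) - S s) - U j s * (G (U j s) - S s)\<bar> \<le>
    (L + K) * \<bar>U i s - U j s\<bar>"
proof -
  have "(\<Sum>r\<in>{i,j}. (U r \<tau>)\<^sup>2) \<le> (\<Sum>r\<in>{1..k}. (U r \<tau>)\<^sup>2)"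
    by (rule sum_mono2) (use i j in auto)
  then have "2 * (U j \<tau>)\<^sup>2 \<le> 1"
    using assms(3,5) sum_squares_le_1[OF \<open>\<tau> \<ge> 0\<close>] by simp
  then have "\<not> \<bar>4/5\<bar> \<le> \<bar>U j \<tau>\<bar>"
    unfolding abs_le_square_iff by (simp add: power_divide)
  then have small: "norm (U i \<tau>) < 4/5" "norm (U j \<tau>) < 4/5"
    using assms(5) by auto
  have continuous: "continuous (at \<tau> within {0..}) (U r)" if "r \<in> {1..k}" for r
    using U_continuous[OF that] \<open>\<tau> \<ge> 0\<close> by (simp add: continuous_on_eq_continuous_within)
  obtain \<epsilon>\<^sub>i \<epsilon>\<^sub>j where \<epsilon>: "\<epsilon>\<^sub>i > 0" "\<epsilon>\<^sub>j > 0"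
    and near: "\<forall>s\<in>{\<tau>..\<tau>+\<epsilon>\<^sub>i}. norm (U i s) \<le> 4/5" "\<forall>s\<in>{\<tau>..\<tau>+\<epsilon>\<^sub>j}. norm (U j s) \<le> 4/5"
    using continuous_within_atLeast_right_bound[OF continuous \<open>\<tau> \<ge> 0\<close>] small i j by metis
  have "\<bar>U i s * (G (U i s) - S s) - U j s * (G (U j s) - S s)\<bar> \<le> (L + K) * \<bar>U i s - U j s\<bar>"
    if s: "s \<in> {\<tau>..\<tau> + min \<epsilon>\<^sub>i \<epsilon>\<^sub>j}" for s
  proof -
    have "U i s * (G (U i s) - S s) - U j s * (G (U j s) - S s) =
        (U i s * G (U i s) - U j s * G (U j s)) - S s * (U i s - U j s)"
      by (simp add: algebra_simps)
    then have "\<bar>U i s * (G (U i s) - S s) - U j s * (G (U j s) - S s)\<bar> \<le>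
        \<bar>U i s * G (U i s) - U j s * G (U j s)\<bar> + \<bar>S s\<bar> * \<bar>U i s - U j s\<bar>"
      using abs_triangle_ineq4[of "U i s * G (U i s) - U j s * G (U j s)" "S s * (U i s - U j s)"]
      by (simp only: abs_mult)
    also have "\<dots> \<le> L * \<bar>U i s - U j s\<bar> + K * \<bar>U i s - U j s\<bar>"
      using mult_G_lipschitz[of "U i s" "U j s"] abs_S_le[of s] near s \<open>\<tau> \<ge> 0\<close>
      by (intro add_mono mult_right_mono) auto
    finally show ?thesis
      by (simp add: algebra_simps)
  qed
  then show ?thesis
    using \<epsilon> by (intro exI[of _ "min \<epsilon>\<^sub>i \<epsilon>\<^sub>j"]) auto
qed

lemma sign_flip:
  assumes G_even: "\<And>u. G (- u) = G u" and unit: "\<And>j. \<bar>\<epsilon> j\<bar> = 1"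
  shows "overlap_flow K c0 L m k G (\<lambda>j t. \<epsilon> j * U j t) S"
proof -
  have G_flip: "G (\<epsilon> j * u) = G u" and square_flip: "(\<epsilon> j * u)\<^sup>2 = u\<^sup>2" for j u
    using unit[of j] G_even[of u] by (auto simp: abs_if power_mult_distrib split: if_splits)
  show ?thesis
  proof unfold_locales
    fix j :: nat and t :: real assume "j \<in> {1..k}" "t \<ge> 0"
    from DERIV_cmult[OF U_deriv[OF this], of "\<epsilon> j"]
    show "((\<lambda>t. \<epsilon> j * U j t) has_real_derivative \<epsilon> j * U j t * (G (\<epsilon> j * U j t) - S t))
        (at t within {0..})"
      by (simp add: G_flip mult.assoc)
  qed (use G_bounded G_increment G_0_nonneg c0_pos m_pos mult_G_lipschitz sum_squares_le_1 in
       \<open>auto simp: S_eq G_flip square_flip\<close>)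
qed

end

locale ordered_overlap_flow = overlap_flow +
  fixes l :: nat and a :: real
  assumes l_pos: "1 \<le> l" and l_le_k: "l \<le> k" and a_pos: "0 < a"
    and top_init: "\<And>j. j \<in> {1..l} \<Longrightarrow> U j 0 = a"
    and lower_init: "\<And>j. j \<in> {l+1..k} \<Longrightarrow> 0 \<le> U j 0 \<and> U j 0 < a"
begin

lemma first_index: "1 \<in> {1..k}"
  using l_pos l_le_k by auto

lemma first_pos: "t \<ge> 0 \<Longrightarrow> 0 < U 1 t"
  using positive_overlap_stays_positive[OF first_index] top_init[of 1] l_pos a_pos by auto

lemma top_overlaps_equal:
  assumes j: "j \<in> {1..l}" and "t \<ge> 0"
  shows "U j t = U 1 t"
proof (cases "j = 1")
  case False
  have jk: "j \<in> {1..k}"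
    using j l_le_k by auto
  have deriv: "((\<lambda>t. U j t - U 1 t) has_real_derivative
      U j t * (G (U j t) - S t) - U 1 t * (G (U 1 t) - S t)) (at t within {0..})" if "t \<ge> 0" for t
    using DERIV_diff[OF U_deriv[OF jk that] U_deriv[OF first_index that]] .
  have "U j t - U 1 t = 0"
  proof (rule vanishing_persists[OF deriv _ _ \<open>t \<ge> 0\<close>])
    show "U j 0 - U 1 0 = 0"
      using top_init[OF j] top_init[of 1] l_pos by simp
    fix \<tau> :: real assume "\<tau> \<ge> 0" "U j \<tau> - U 1 \<tau> = 0"
    then have "U j \<tau> = U 1 \<tau>"
      by simp
    from coinciding_overlaps_local_lipschitz[OF jk first_index False \<open>\<tau> \<ge> 0\<close> this]
    show "\<exists>\<epsilon>>0. \<exists>C. \<forall>s\<in>{\<tau>..\<tau>+\<epsilon>}.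
        \<bar>U j s * (G (U j s) - S s) - U 1 s * (G (U 1 s) - S s)\<bar> \<le> C * \<bar>U j s - U 1 s\<bar>"
      by blast
  qed
  then show ?thesis
    by simp
qed simp

lemma ratio_has_derivative:
  assumes "i \<in> {1..k}" "t \<ge> 0"
  shows "((\<lambda>t. U i t / U 1 t) has_real_derivative U i t / U 1 t * (G (U i t) - G (U 1 t)))
    (at t within {0..})"
proof -
  have "U 1 t \<noteq> 0"
    using first_pos[OF assms(2)] by simp
  moreover note DERIV_divide[OF U_deriv[OF assms] U_deriv[OF first_index assms(2)] this]
  moreover have "(U i t * (G (U i t) - S t) * U 1 t - U i t * (U 1 t * (G (U 1 t) - S t))) /
      (U 1 t * U 1 t) = U i t / U 1 t * (G (U i t) - G (U 1 t))"
    using \<open>U 1 t \<noteq> 0\<close> by (simp add: field_simps)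
  ultimately show ?thesis
    by simp
qed

lemma ratio_derivative_nonpos:
  assumes "t \<ge> 0" "0 \<le> U i t" "U i t \<le> U 1 t"
  shows "U i t / U 1 t * (G (U i t) - G (U 1 t)) \<le> 0"
  using G_mono[of "U i t" "U 1 t"] abs_U_le_1[OF first_index assms(1)] first_pos[OF assms(1)] assms(2,3)
  by (simp add: divide_nonpos_pos mult_nonneg_nonpos)

lemma lower_nonneg:
  assumes i: "i \<in> {l+1..k}" and "t \<ge> 0"
  shows "0 \<le> U i t"
proof -
  have ik: "i \<in> {1..k}"
    using i l_pos by auto
  show ?thesis
  proof (cases "U i 0 = 0")
    case True
    then show ?thesis using zero_overlap_stays_zero[OF ik True \<open>t \<ge> 0\<close>] by simp
  next
    case False
    then show ?thesis
      using positive_overlap_stays_positive[OF ik _ \<open>t \<ge> 0\<close>] lower_init[OF i] by fastforce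
  qed
qed

lemma lower_below_first:
  assumes i: "i \<in> {l+1..k}" and "t \<ge> 0"
  shows "U i t < U 1 t"
proof -
  have ik: "i \<in> {1..k}"
    using i l_pos by auto
  define \<rho> where "\<rho> t = U i t / U 1 t" for t
  have deriv: "(\<rho> has_real_derivative \<rho> t * (G (U i t) - G (U 1 t))) (at t within {0..})"
    if "t \<ge> 0" for t
    unfolding \<rho>_def[abs_def] using ratio_has_derivative[OF ik that] .
  have "0 < 1 - \<rho> t"
  proof (rule positivity_persists[OF _ _ _ \<open>t \<ge> 0\<close>])
    show "continuous_on {0..} (\<lambda>t. 1 - \<rho> t)"
      using has_real_derivative_imp_continuous_on_atLeast[OF deriv]
      by (intro continuous_on_diff continuous_on_const)
    show "0 < 1 - \<rho> 0"
      using lower_init[OF i] top_init[of 1] l_pos a_pos by (simp add: \<rho>_def)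
    fix \<tau> :: real assume "\<tau> \<ge> 0" and below: "\<forall>s\<in>{0..\<tau>}. 0 \<le> 1 - \<rho> s"
    have "\<rho> \<tau> \<le> \<rho> 0"
    proof (rule nonpos_derivative_imp_decreasing[OF order_refl \<open>\<tau> \<ge> 0\<close> deriv])
      fix s assume s: "0 \<le> s" "s \<le> \<tau>"
      then have "U i s \<le> U 1 s"
        using below[rule_format, of s] s first_pos[of s] by (simp add: \<rho>_def divide_le_eq_1_pos)
      then show "\<rho> s * (G (U i s) - G (U 1 s)) \<le> 0"
        unfolding \<rho>_def using ratio_derivative_nonpos lower_nonneg[OF i] s by simp
    qed
    then show "0 < 1 - \<rho> \<tau>"
      using \<open>0 < 1 - \<rho> 0\<close> by simp
  qed
  then show ?thesis
    using first_pos[OF \<open>t \<ge> 0\<close>] by (simp add: \<rho>_def divide_less_eq)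
qed

lemma overlap_between_0_and_first:
  assumes "j \<in> {1..k}" "t \<ge> 0"
  shows "0 \<le> U j t \<and> U j t \<le> U 1 t"
proof (cases "j \<le> l")
  case True
  then show ?thesis
    using top_overlaps_equal[of j t] first_pos[of t] assms by auto
next
  case False
  then show ?thesis
    using lower_nonneg[of j t] lower_below_first[of j t] assms by (auto simp: less_imp_le)
qed

lemma lower_ratio_decreasing:
  assumes "i \<in> {l+1..k}" "0 \<le> s" "s \<le> t"
  shows "U i t / U 1 t \<le> U i s / U 1 s"
proof (rule nonpos_derivative_imp_decreasing[OF assms(2,3) ratio_has_derivative])
  fix r assume "s \<le> r" "r \<le> t"
  then show "U i r / U 1 r * (G (U i r) - G (U 1 r)) \<le> 0"
    using ratio_derivative_nonpos overlap_between_0_and_first[of i r] assms by auto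
qed (use assms l_pos in auto)

lemma S_le_G_first:
  assumes "t \<ge> 0"
  shows "S t \<le> G (U 1 t)"
proof -
  have "S t \<le> (\<Sum>j\<in>{1..k}. (U j t)\<^sup>2 * G (U 1 t))"
    unfolding S_eq using overlap_between_0_and_first abs_U_le_1[OF first_index] assms
    by (intro sum_mono mult_left_mono G_mono) auto
  also have "\<dots> = G (U 1 t) * (\<Sum>j\<in>{1..k}. (U j t)\<^sup>2)"
    by (simp add: sum_distrib_left mult.commute)
  also have "\<dots> \<le> G (U 1 t)"
    using sum_squares_le_1[OF assms] G_nonneg[of "U 1 t"] first_pos[OF assms]
      abs_U_le_1[OF first_index assms] by (simp add: mult_left_le)
  finally show ?thesis .
qed

lemma first_ge_initial:
  assumes "t \<ge> 0"
  shows "a \<le> U 1 t"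
proof -
  have "- U 1 t \<le> - U 1 0"
  proof (rule nonpos_derivative_imp_decreasing[OF order_refl assms])
    fix s assume "0 \<le> s" "s \<le> t"
    then show "((\<lambda>t. - U 1 t) has_real_derivative - (U 1 s * (G (U 1 s) - S s))) (at s within {0..})"
      using DERIV_minus[OF U_deriv[OF first_index]] by simp
    show "- (U 1 s * (G (U 1 s) - S s)) \<le> 0"
      using S_le_G_first[of s] first_pos[of s] \<open>0 \<le> s\<close> by simp
  qed
  then show ?thesis
    using top_init[of 1] l_pos by simp
qed

lemma S_lower_bound:
  assumes "t \<ge> 0"
  shows "c0 * a ^ (m + 2) \<le> S t"
proof -
  have first: "a \<le> U 1 t" "U 1 t \<le> 1"
    using first_ge_initial[OF assms] abs_U_le_1[OF first_index assms] by auto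
  have "c0 * a ^ (m + 2) = a\<^sup>2 * (c0 * a ^ m)"
    by (simp add: power_add power2_eq_square algebra_simps)
  also have "\<dots> \<le> (U 1 t)\<^sup>2 * G (U 1 t)"
  proof (rule mult_mono)
    show "a\<^sup>2 \<le> (U 1 t)\<^sup>2"
      using first a_pos by (simp add: power_mono)
    have "c0 * a ^ m \<le> c0 * (U 1 t) ^ m"
      using first a_pos c0_pos by (simp add: power_mono)
    also have "\<dots> \<le> G (U 1 t)"
      using G_ge_power first a_pos by simp
    finally show "c0 * a ^ m \<le> G (U 1 t)" .
  qed (use G_nonneg first a_pos c0_pos in auto)
  also have "\<dots> \<le> S t"
    unfolding S_eq using overlap_between_0_and_first abs_U_le_1 G_nonneg assms
    by (intro member_le_sum[OF first_index]) auto
  finally show ?thesis .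
qed

lemma sum_squares_tendsto_1: "((\<lambda>t. \<Sum>j\<in>{1..k}. (U j t)\<^sup>2) \<longlongrightarrow> 1) at_top"
proof -
  define q where "q t = 1 - (\<Sum>j\<in>{1..k}. (U j t)\<^sup>2)" for t
  define \<gamma> where "\<gamma> = 2 * (c0 * a ^ (m + 2))"
  have "\<gamma> > 0"
    using c0_pos a_pos by (simp add: \<gamma>_def)
  have decay: "q t \<le> q 0 * exp (- \<gamma> * (t - 0))" if "t \<ge> 0" for t
  proof (rule gronwall_exp_bound[OF order_refl that])
    fix s :: real assume "0 \<le> s"
    then show "(q has_real_derivative - 2 * S s * q s) (at s within {0..})"
      unfolding q_def[abs_def] by (rule off_span_mass_has_derivative)
    show "- 2 * S s * q s \<le> - \<gamma> * q s"
      using S_lower_bound[of s] sum_squares_le_1[of s] \<open>0 \<le> s\<close>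
      by (simp add: \<gamma>_def q_def mult_right_mono)
  qed
  have "(q \<longlongrightarrow> 0) at_top"
  proof (rule tendsto_sandwich[of "\<lambda>_. 0" q at_top "\<lambda>t. q 0 * exp (- \<gamma> * t)"])
    show "\<forall>\<^sub>F t in at_top. 0 \<le> q t"
      using eventually_ge_at_top[of 0] by eventually_elim (use sum_squares_le_1 in \<open>simp add: q_def\<close>)
    show "\<forall>\<^sub>F t in at_top. q t \<le> q 0 * exp (- \<gamma> * t)"
      using eventually_ge_at_top[of 0] by eventually_elim (use decay in simp)
    show "((\<lambda>t. q 0 * exp (- \<gamma> * t)) \<longlongrightarrow> 0) at_top"
      using \<open>\<gamma> > 0\<close> by real_asymp
  qed simp
  then have "((\<lambda>t. 1 - q t) \<longlongrightarrow> 1 - 0) at_top"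
    by (intro tendsto_diff tendsto_const)
  then show ?thesis
    by (simp add: q_def)
qed

lemma lower_ratio_exp_decay:
  assumes i: "i \<in> {l+1..k}" and "t \<ge> 0"
  shows "U i t / U 1 t \<le> U i 0 / U 1 0 * exp (- (c0 * a ^ m * (1 - (U i 0 / U 1 0) ^ m)) * t)"
proof -
  have ik: "i \<in> {1..k}"
    using i l_pos by auto
  define \<rho> where "\<rho> t = U i t / U 1 t" for t
  have \<rho>_range: "0 \<le> \<rho> t" "\<rho> t \<le> \<rho> 0" if "t \<ge> 0" for t
    using overlap_between_0_and_first[OF ik that] first_pos[OF that]
      lower_ratio_decreasing[OF i order_refl that] by (auto simp: \<rho>_def)
  have "\<rho> 0 \<le> 1"
    using lower_init[OF i] top_init[of 1] l_pos by (simp add: \<rho>_def)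
  have "\<rho> t \<le> \<rho> 0 * exp (- (c0 * a ^ m * (1 - \<rho> 0 ^ m)) * (t - 0))"
  proof (rule gronwall_exp_bound[OF order_refl \<open>t \<ge> 0\<close>])
    fix s :: real assume "0 \<le> s"
    then show "(\<rho> has_real_derivative \<rho> s * (G (U i s) - G (U 1 s))) (at s within {0..})"
      unfolding \<rho>_def[abs_def] by (rule ratio_has_derivative[OF ik])
    have first: "a \<le> U 1 s" "U 1 s \<le> 1" "0 < U 1 s"
      using first_ge_initial[OF \<open>0 \<le> s\<close>] abs_U_le_1[OF first_index \<open>0 \<le> s\<close>] first_pos[OF \<open>0 \<le> s\<close>]
      by auto
    have "a ^ m * (1 - \<rho> 0 ^ m) \<le> (U 1 s) ^ m * (1 - \<rho> s ^ m)"
      using first a_pos \<rho>_range[OF \<open>0 \<le> s\<close>] \<rho>_range[of 0] \<open>\<rho> 0 \<le> 1\<close>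
      by (intro mult_mono power_mono diff_left_mono) (auto simp: power_le_one)
    also have "\<dots> = (U 1 s) ^ m - (U i s) ^ m"
      using first by (simp add: \<rho>_def power_divide algebra_simps)
    finally have "c0 * a ^ m * (1 - \<rho> 0 ^ m) \<le> c0 * ((U 1 s) ^ m - (U i s) ^ m)"
      using c0_pos by (simp add: mult.assoc mult_left_mono)
    also have "\<dots> \<le> G (U 1 s) - G (U i s)"
      using G_increment[of "U i s" "U 1 s"] overlap_between_0_and_first[OF ik \<open>0 \<le> s\<close>] first by simp
    finally have "c0 * a ^ m * (1 - \<rho> 0 ^ m) * \<rho> s \<le> (G (U 1 s) - G (U i s)) * \<rho> s"
      using \<rho>_range(1)[OF \<open>0 \<le> s\<close>] by (rule mult_right_mono)
    then show "\<rho> s * (G (U i s) - G (U 1 s)) \<le> - (c0 * a ^ m * (1 - \<rho> 0 ^ m)) * \<rho> s"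
      by (simp add: algebra_simps)
  qed
  then show ?thesis
    by (simp add: \<rho>_def)
qed

lemma lower_overlap_tendsto_0:
  assumes i: "i \<in> {l+1..k}"
  shows "(U i \<longlongrightarrow> 0) at_top"
proof -
  define \<rho>\<^sub>0 where "\<rho>\<^sub>0 = U i 0 / U 1 0"
  define \<gamma> where "\<gamma> = c0 * a ^ m * (1 - \<rho>\<^sub>0 ^ m)"
  have "0 \<le> \<rho>\<^sub>0" "\<rho>\<^sub>0 < 1"
    using lower_init[OF i] top_init[of 1] l_pos a_pos by (auto simp: \<rho>\<^sub>0_def)
  then have "\<gamma> > 0"
    using c0_pos a_pos m_pos by (simp add: \<gamma>_def power_less_one_iff)
  have bound: "U i t \<le> \<rho>\<^sub>0 * exp (- \<gamma> * t)" if "t \<ge> 0" for t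
  proof -
    have "U i t \<le> U i t / U 1 t"
      using lower_nonneg[OF i that] first_pos[OF that] abs_U_le_1[OF first_index that]
      by (simp add: le_divide_eq mult_left_le)
    also have "\<dots> \<le> \<rho>\<^sub>0 * exp (- \<gamma> * t)"
      unfolding \<rho>\<^sub>0_def \<gamma>_def by (rule lower_ratio_exp_decay[OF i that])
    finally show ?thesis .
  qed
  show ?thesis
  proof (rule tendsto_sandwich[of "\<lambda>_. 0" _ at_top "\<lambda>t. \<rho>\<^sub>0 * exp (- \<gamma> * t)"])
    show "\<forall>\<^sub>F t in at_top. 0 \<le> U i t"
      using eventually_ge_at_top[of 0] by eventually_elim (rule lower_nonneg[OF i])
    show "\<forall>\<^sub>F t in at_top. U i t \<le> \<rho>\<^sub>0 * exp (- \<gamma> * t)"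
      using eventually_ge_at_top[of 0] by eventually_elim (rule bound)
    show "((\<lambda>t. \<rho>\<^sub>0 * exp (- \<gamma> * t)) \<longlongrightarrow> 0) at_top"
      using \<open>\<gamma> > 0\<close> by real_asymp
  qed simp
qed

lemma first_overlap_squared_eq:
  assumes "t \<ge> 0"
  shows "(U 1 t)\<^sup>2 = ((\<Sum>i\<in>{1..k}. (U i t)\<^sup>2) - (\<Sum>i\<in>{l+1..k}. (U i t)\<^sup>2)) / real l"
proof -
  have "{1..k} = {1..l} \<union> {l+1..k}"
    using l_le_k by auto
  then have "(\<Sum>i\<in>{1..k}. (U i t)\<^sup>2) = (\<Sum>i\<in>{1..l}. (U i t)\<^sup>2) + (\<Sum>i\<in>{l+1..k}. (U i t)\<^sup>2)"
    by (simp add: sum.union_disjoint)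
  also have "(\<Sum>i\<in>{1..l}. (U i t)\<^sup>2) = (\<Sum>i\<in>{1..l}. (U 1 t)\<^sup>2)"
    using top_overlaps_equal[OF _ assms] by (intro sum.cong refl) (metis)
  also have "\<dots> = real l * (U 1 t)\<^sup>2"
    by simp
  finally show ?thesis
    using l_pos by simp
qed

lemma first_overlap_squared_tendsto: "((\<lambda>t. (U 1 t)\<^sup>2) \<longlongrightarrow> 1 / real l) at_top"
proof (rule Lim_transform_eventually)
  have "((\<lambda>t. ((\<Sum>i\<in>{1..k}. (U i t)\<^sup>2) - (\<Sum>i\<in>{l+1..k}. (U i t)\<^sup>2)) / real l) \<longlongrightarrow>
      (1 - (\<Sum>i\<in>{l+1..k}. 0\<^sup>2)) / real l) at_top"
    by (intro tendsto_intros sum_squares_tendsto_1 lower_overlap_tendsto_0) (use l_pos in auto)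
  then show "((\<lambda>t. ((\<Sum>i\<in>{1..k}. (U i t)\<^sup>2) - (\<Sum>i\<in>{l+1..k}. (U i t)\<^sup>2)) / real l) \<longlongrightarrow>
      1 / real l) at_top"
    by simp
  show "\<forall>\<^sub>F t in at_top. ((\<Sum>i\<in>{1..k}. (U i t)\<^sup>2) - (\<Sum>i\<in>{l+1..k}. (U i t)\<^sup>2)) / real l = (U 1 t)\<^sup>2"
    using eventually_ge_at_top[of 0] by eventually_elim (rule first_overlap_squared_eq[symmetric])
qed

lemma top_overlap_tendsto:
  assumes j: "j \<in> {1..l}"
  shows "(U j \<longlongrightarrow> 1 / sqrt (real l)) at_top"
proof -
  have "((\<lambda>t. sqrt ((U 1 t)\<^sup>2)) \<longlongrightarrow> sqrt (1 / real l)) at_top"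
    by (rule tendsto_real_sqrt[OF first_overlap_squared_tendsto])
  moreover have "\<forall>\<^sub>F t in at_top. sqrt ((U 1 t)\<^sup>2) = U j t"
    using eventually_ge_at_top[of 0]
    by eventually_elim (use top_overlaps_equal[OF j] first_pos in \<open>simp add: less_imp_le\<close>)
  ultimately show ?thesis
    by (simp add: tendsto_cong real_sqrt_divide)
qed

end

section \<open>The spherical gradient flow\<close>

locale spherical_gradient_flow =
  fixes \<sigma> \<sigma>s :: "real \<Rightarrow> real" and k :: nat
    and v :: "nat \<Rightarrow> real^'d" and w :: "real \<Rightarrow> real^'d"
  assumes standing: "standing_assms \<sigma> \<sigma>s"
    and orthonormal: "\<forall>i\<in>{1..k}. \<forall>j\<in>{1..k}. v i \<bullet> v j = (if i = j then 1 else 0)"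
    and ode: "\<forall>t\<ge>0. (w has_vector_derivative
      (- (loss_grad \<sigma> \<sigma>s k v (w t) - (w t \<bullet> loss_grad \<sigma> \<sigma>s k v (w t)) *\<^sub>R w t)))
      (at t within {0..})"
    and unit_init: "norm (w 0) = 1"
begin

abbreviation "c \<equiv> ccoef \<sigma> \<sigma>s"
abbreviation "P \<equiv> info_exp \<sigma>s"
abbreviation "grad \<equiv> loss_grad \<sigma> \<sigma>s k v"

lemma c_below_P: "p < P \<Longrightarrow> c p = 0"
  unfolding ccoef_def info_exp_def using not_less_Least by fastforce

lemma c_nonneg: "0 \<le> c p"
  using standing c_below_P unfolding standing_assms_def by (cases "p < P") auto

lemma c_P_pos: "0 < c P"
  using standing unfolding standing_assms_def by auto

lemma summable_c_mult: "summable (\<lambda>p. c p * real p)"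
  using standing unfolding standing_assms_def by auto

definition K :: real where
  "K = (\<Sum>p. c p * real p)"

lemma c_mult_le_K: "c p * real p \<le> K"
  using sum_le_suminf[OF summable_c_mult, of "{p}"] c_nonneg by (simp add: K_def)

lemma norm_v: "j \<in> {1..k} \<Longrightarrow> norm (v j) = 1"
  using orthonormal by (simp add: norm_eq_sqrt_inner)

lemma abs_inner_v_le: "j \<in> {1..k} \<Longrightarrow> \<bar>v j \<bullet> x\<bar> \<le> norm x"
  using Cauchy_Schwarz_ineq2[of "v j" x] norm_v by simp

lemma inner_v_combination:
  assumes "i \<in> {1..k}"
  shows "v i \<bullet> (\<Sum>j\<in>{1..k}. b j *\<^sub>R v j) = b i"
proof -
  have "v i \<bullet> (\<Sum>j\<in>{1..k}. b j *\<^sub>R v j) = (\<Sum>j\<in>{1..k}. b j * (v i \<bullet> v j))"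
    by (simp add: inner_sum_right)
  also have "\<dots> = (\<Sum>j\<in>{1..k}. if i = j then b j else 0)"
    using orthonormal assms by (intro sum.cong) auto
  finally show ?thesis
    using assms by simp
qed

lemma sum_overlaps_squared_le: "(\<Sum>j\<in>{1..k}. (v j \<bullet> x)\<^sup>2) \<le> (norm x)\<^sup>2"
proof -
  define y where "y = (\<Sum>j\<in>{1..k}. (v j \<bullet> x) *\<^sub>R v j)"
  have vy: "v j \<bullet> y = v j \<bullet> x" if "j \<in> {1..k}" for j
    unfolding y_def by (rule inner_v_combination[OF that])
  have "y \<bullet> y = (\<Sum>j\<in>{1..k}. (v j \<bullet> x) * (v j \<bullet> y))"
    unfolding y_def inner_sum_left inner_scaleR_left ..
  also have "\<dots> = (\<Sum>j\<in>{1..k}. (v j \<bullet> x)\<^sup>2)"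
    by (intro sum.cong) (auto simp: vy power2_eq_square)
  finally have yy: "y \<bullet> y = (\<Sum>j\<in>{1..k}. (v j \<bullet> x)\<^sup>2)" .
  have xy: "x \<bullet> y = (\<Sum>j\<in>{1..k}. (v j \<bullet> x)\<^sup>2)"
    unfolding y_def inner_sum_right inner_scaleR_right
    by (intro sum.cong) (auto simp: power2_eq_square inner_commute)
  have "0 \<le> (x - y) \<bullet> (x - y)"
    by simp
  also have "\<dots> = x \<bullet> x - 2 * (x \<bullet> y) + y \<bullet> y"
    by (simp add: inner_diff_left inner_diff_right inner_commute[of y x])
  finally show ?thesis
    using xy yy by (simp add: power2_norm_eq_inner)
qed

definition grad_term :: "nat \<Rightarrow> real^'d \<Rightarrow> real^'d" where
  "grad_term p x = (\<Sum>j\<in>{1..k}. (c p * real p * (v j \<bullet> x) ^ (p - 1)) *\<^sub>R v j)"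

lemma grad_eq_suminf: "grad x = - (\<Sum>p. grad_term p x)"
  unfolding loss_grad_def grad_term_def by (simp add: scaleR_sum_right)

lemma inner_grad_term: "i \<in> {1..k} \<Longrightarrow> v i \<bullet> grad_term p x = c p * real p * (v i \<bullet> x) ^ (p - 1)"
  unfolding grad_term_def by (rule inner_v_combination)

lemma grad_term_sums:
  assumes "\<And>j. j \<in> {1..k} \<Longrightarrow> (\<lambda>p. c p * real p * (v j \<bullet> x) ^ (p - 1)) sums g j"
  shows "(\<lambda>p. grad_term p x) sums (\<Sum>j\<in>{1..k}. g j *\<^sub>R v j)"
  unfolding grad_term_def using assms by (intro sums_sum sums_scaleR_left)

lemma grad_coefficient_series_bounded:
  "\<exists>\<delta>>0. \<exists>M\<ge>0. \<forall>u. \<bar>u\<bar> \<le> 1 + \<delta> \<longrightarrow> summable (\<lambda>p. c p * real p * u ^ (p - 1)) \<longrightarrow>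
    \<bar>\<Sum>p. c p * real p * u ^ (p - 1)\<bar> \<le> M"
proof -
  have nonneg: "0 \<le> c (Suc n) * real (Suc n)" for n
    using c_nonneg by simp
  have "summable (\<lambda>n. c (Suc n) * real (Suc n))"
    using summable_c_mult by (subst summable_Suc_iff)
  from nonneg_powser_bounded_beyond_1[OF nonneg this]
  obtain \<delta> M where "\<delta> > 0" "M \<ge> 0"
    and M: "\<And>u. \<bar>u\<bar> \<le> 1 + \<delta> \<Longrightarrow> summable (\<lambda>n. c (Suc n) * real (Suc n) * u ^ n) \<Longrightarrow>
      \<bar>\<Sum>n. c (Suc n) * real (Suc n) * u ^ n\<bar> \<le> M"
    by blast
  have "\<bar>\<Sum>p. c p * real p * u ^ (p - 1)\<bar> \<le> M"
    if "\<bar>u\<bar> \<le> 1 + \<delta>" and summable: "summable (\<lambda>p. c p * real p * u ^ (p - 1))" for u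
  proof -
    have "summable (\<lambda>n. c (Suc n) * real (Suc n) * u ^ n)"
      using summable_Suc_iff[THEN iffD2, OF summable] by simp
    moreover have "(\<Sum>n. c (Suc n) * real (Suc n) * u ^ n) = (\<Sum>p. c p * real p * u ^ (p - 1))"
      using suminf_split_head[OF summable] by simp
    ultimately show ?thesis
      using M[OF that(1)] by simp
  qed
  then show ?thesis
    using \<open>\<delta> > 0\<close> \<open>M \<ge> 0\<close> by blast
qed

text \<open>Off the sphere the series defining the gradient may diverge, and then \<open>suminf\<close> returns a
  fixed junk vector; either way the gradient stays bounded near the sphere.\<close>

lemma grad_bounded_near_sphere: "\<exists>\<delta>>0. \<exists>M. \<forall>x. norm x \<le> 1 + \<delta> \<longrightarrow> norm (grad x) \<le> M"
proof -
  obtain \<delta> M where "\<delta> > 0" "M \<ge> 0" and scalar: "\<And>u. \<bar>u\<bar> \<le> 1 + \<delta> \<Longrightarrow>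
      summable (\<lambda>p. c p * real p * u ^ (p - 1)) \<Longrightarrow> \<bar>\<Sum>p. c p * real p * u ^ (p - 1)\<bar> \<le> M"
    using grad_coefficient_series_bounded by blast
  have "norm (grad x) \<le> real k * M + norm (THE s::real^'d. False)" if x: "norm x \<le> 1 + \<delta>" for x
  proof (cases "summable (\<lambda>p. grad_term p x)")
    case True
    let ?g = "\<lambda>j. \<Sum>p. c p * real p * (v j \<bullet> x) ^ (p - 1)"
    have component: "summable (\<lambda>p. c p * real p * (v j \<bullet> x) ^ (p - 1))" if "j \<in> {1..k}" for j
      using bounded_linear.summable[OF bounded_linear_inner_right True, of "v j"]
      by (simp add: inner_grad_term[OF that])
    then have "(\<lambda>p. grad_term p x) sums (\<Sum>j\<in>{1..k}. ?g j *\<^sub>R v j)"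
      by (intro grad_term_sums summable_sums)
    then have "norm (grad x) = norm (\<Sum>j\<in>{1..k}. ?g j *\<^sub>R v j)"
      by (simp add: grad_eq_suminf sums_unique[symmetric])
    also have "\<dots> \<le> (\<Sum>j\<in>{1..k}. norm (?g j *\<^sub>R v j))"
      by (rule norm_sum)
    also have "\<dots> \<le> (\<Sum>j\<in>{1..k}. M)"
    proof (rule sum_mono)
      fix j assume j: "j \<in> {1..k}"
      have "\<bar>v j \<bullet> x\<bar> \<le> 1 + \<delta>"
        using abs_inner_v_le[OF j, of x] x by simp
      then show "norm (?g j *\<^sub>R v j) \<le> M"
        using scalar[OF _ component[OF j]] norm_v[OF j] by simp
    qed
    finally have "norm (grad x) \<le> real k * M"
      by simp
    then show ?thesis
      using norm_ge_zero[of "THE s::real^'d. False"] by linarith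
  next
    case False
    then show ?thesis
      using \<open>M \<ge> 0\<close> by (simp add: grad_eq_suminf suminf_not_summable)
  qed
  then show ?thesis
    using \<open>\<delta> > 0\<close> by blast
qed

lemma sphere_defect_has_derivative:
  assumes "t \<ge> 0"
  shows "((\<lambda>t. w t \<bullet> w t - 1) has_real_derivative 2 * (w t \<bullet> grad (w t)) * (w t \<bullet> w t - 1))
    (at t within {0..})"
proof -
  let ?w' = "- (grad (w t) - (w t \<bullet> grad (w t)) *\<^sub>R w t)"
  have "(w has_vector_derivative ?w') (at t within {0..})"
    using ode assms by auto
  from bounded_bilinear.has_vector_derivative[OF bounded_bilinear_inner this this]
  have "((\<lambda>t. w t \<bullet> w t) has_real_derivative w t \<bullet> ?w' + ?w' \<bullet> w t) (at t within {0..})"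
    by (simp add: has_real_derivative_iff_has_vector_derivative)
  from DERIV_diff[OF this DERIV_const[of 1]]
  have "((\<lambda>t. w t \<bullet> w t - 1) has_real_derivative w t \<bullet> ?w' + ?w' \<bullet> w t - 0) (at t within {0..})" .
  moreover have "w t \<bullet> ?w' + ?w' \<bullet> w t - 0 = 2 * (w t \<bullet> grad (w t)) * (w t \<bullet> w t - 1)"
    unfolding inner_commute[of ?w' "w t"] inner_minus_right inner_diff_right inner_scaleR_right
    by (simp add: algebra_simps)
  ultimately show ?thesis
    by simp
qed

lemma norm_preserved:
  assumes "t \<ge> 0"
  shows "norm (w t) = 1"
proof -
  obtain \<delta> M where "\<delta> > 0" and M: "\<And>x. norm x \<le> 1 + \<delta> \<Longrightarrow> norm (grad x) \<le> M"
    using grad_bounded_near_sphere by blast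
  define s where "s t = w t \<bullet> w t - 1" for t
  define s' where "s' t = 2 * (w t \<bullet> grad (w t)) * s t" for t
  have deriv: "(s has_real_derivative s' t) (at t within {0..})" if "t \<ge> 0" for t
    unfolding s_def[abs_def] s'_def using sphere_defect_has_derivative[OF that] by (simp add: s_def)
  have "s t = 0"
  proof (rule vanishing_persists[OF deriv _ _ assms])
    show "s 0 = 0"
      using unit_init by (simp add: s_def flip: power2_norm_eq_inner)
  next
    fix \<tau> :: real assume "\<tau> \<ge> 0" "s \<tau> = 0"
    then have "norm (w \<tau>) < 1 + \<delta>"
      using \<open>\<delta> > 0\<close> by (simp add: s_def norm_eq_sqrt_inner)
    moreover have "continuous (at \<tau> within {0..}) w"
      using ode \<open>\<tau> \<ge> 0\<close> by (meson has_vector_derivative_continuous)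
    ultimately obtain \<epsilon> where "\<epsilon> > 0" and near: "\<forall>r\<in>{\<tau>..\<tau>+\<epsilon>}. norm (w r) \<le> 1 + \<delta>"
      using continuous_within_atLeast_right_bound \<open>\<tau> \<ge> 0\<close> by blast
    have "\<bar>s' r\<bar> \<le> 2 * ((1 + \<delta>) * M) * \<bar>s r\<bar>" if "r \<in> {\<tau>..\<tau>+\<epsilon>}" for r
    proof -
      have "\<bar>w r \<bullet> grad (w r)\<bar> \<le> norm (w r) * norm (grad (w r))"
        by (rule Cauchy_Schwarz_ineq2)
      also have "\<dots> \<le> (1 + \<delta>) * M"
        using near that M[of "w r"] \<open>\<delta> > 0\<close> by (intro mult_mono) auto
      finally show ?thesis
        by (simp add: s'_def abs_mult mult_right_mono)
    qed
    then show "\<exists>\<epsilon>>0. \<exists>C. \<forall>r\<in>{\<tau>..\<tau>+\<epsilon>}. \<bar>s' r\<bar> \<le> C * \<bar>s r\<bar>"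
      using \<open>\<epsilon> > 0\<close> by blast
  qed
  then show ?thesis
    by (simp add: s_def norm_eq_sqrt_inner)
qed

end

locale spherical_gradient_flow_exponent_3 = spherical_gradient_flow +
  assumes info_exp_ge_3: "3 \<le> info_exp \<sigma>s"
begin

definition G :: "real \<Rightarrow> real" where
  "G u = (\<Sum>p. c p * real p * u ^ (p - 2))"

definition L :: real where
  "L = (\<Sum>p. c p * real p * (real (p - 1) * (4/5) ^ (p - 2)))"

definition S :: "real \<Rightarrow> real" where
  "S t = (\<Sum>j\<in>{1..k}. (v j \<bullet> w t)\<^sup>2 * G (v j \<bullet> w t))"

lemma abs_G_term_le: "\<bar>u\<bar> \<le> 1 \<Longrightarrow> \<bar>c p * real p * u ^ (p - 2)\<bar> \<le> c p * real p"
  using c_nonneg[of p] by (simp add: abs_mult power_abs power_le_one mult_left_le)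

lemma summable_G_series: "\<bar>u\<bar> \<le> 1 \<Longrightarrow> summable (\<lambda>p. c p * real p * u ^ (p - 2))"
  using abs_G_term_le by (intro summable_comparison_test'[OF summable_c_mult]) simp

lemma abs_G_le: "\<bar>u\<bar> \<le> 1 \<Longrightarrow> \<bar>G u\<bar> \<le> K"
  using norm_suminf_le[OF _ summable_c_mult, of "\<lambda>p. c p * real p * u ^ (p - 2)"] abs_G_term_le
  by (simp add: G_def K_def)

lemma G_increment:
  assumes "0 \<le> x" "x \<le> y" "y \<le> 1"
  shows "G x + c P * real P * (y ^ (P - 2) - x ^ (P - 2)) \<le> G y"
proof -
  define d where "d p = c p * real p * (y ^ (p - 2) - x ^ (p - 2))" for p
  have sx: "summable (\<lambda>p. c p * real p * x ^ (p - 2))"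
    and sy: "summable (\<lambda>p. c p * real p * y ^ (p - 2))"
    using assms by (auto intro: summable_G_series)
  have sums: "d sums (G y - G x)"
    unfolding d_def[abs_def] right_diff_distrib G_def by (intro sums_diff summable_sums sx sy)
  have "d p \<ge> 0" for p
    using assms c_nonneg[of p] by (simp add: d_def power_mono)
  then have "sum d {P} \<le> suminf d"
    by (intro sum_le_suminf[OF sums_summable[OF sums]]) auto
  then show ?thesis
    using sums_unique[OF sums] by (simp add: d_def)
qed

lemma G_0_nonneg: "0 \<le> G 0"
  unfolding G_def using c_nonneg by (intro suminf_nonneg summable_G_series) auto

lemma mult_G_sums:
  assumes "\<bar>u\<bar> \<le> 1"
  shows "(\<lambda>p. c p * real p * u ^ (p - 1)) sums (u * G u)"
proof -
  have "u * (c p * real p * u ^ (p - 2)) = c p * real p * u ^ (p - 1)" for p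
  proof (cases "p < 3")
    case True
    then show ?thesis
      using c_below_P[of p] info_exp_ge_3 by simp
  next
    case False
    then have "p - 1 = Suc (p - 2)"
      by simp
    then show ?thesis
      by (simp add: algebra_simps)
  qed
  with sums_mult[OF summable_sums[OF summable_G_series[OF assms]], of u] show ?thesis
    by (simp add: G_def)
qed

lemma summable_L_series: "summable (\<lambda>p. c p * real p * (real (p - 1) * (4/5::real) ^ (p - 2)))"
proof (rule summable_comparison_test')
  have "summable (\<lambda>p. real (Suc (p - 2)) * (4/5::real) ^ (p - 2))"
    using summable_Suc_mult_power[of "4/5"] by (subst summable_iff_shift[of _ 2, symmetric]) simp
  then show "summable (\<lambda>p. K * (real (Suc (p - 2)) * (4/5::real) ^ (p - 2)))"
    by (rule summable_mult)
  fix p :: nat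
  have "real (p - 1) * (4/5::real) ^ (p - 2) \<le> real (Suc (p - 2)) * (4/5) ^ (p - 2)"
    by (intro mult_right_mono) auto
  then have "c p * real p * (real (p - 1) * (4/5::real) ^ (p - 2)) \<le>
      K * (real (Suc (p - 2)) * (4/5) ^ (p - 2))"
    using c_mult_le_K[of 0] by (intro mult_mono[OF c_mult_le_K]) auto
  then show "norm (c p * real p * (real (p - 1) * (4/5::real) ^ (p - 2))) \<le>
      K * (real (Suc (p - 2)) * (4/5) ^ (p - 2))"
    using c_nonneg[of p] by simp
qed

lemma mult_G_lipschitz:
  assumes x: "\<bar>x\<bar> \<le> 4/5" and y: "\<bar>y\<bar> \<le> 4/5"
  shows "\<bar>x * G x - y * G y\<bar> \<le> L * \<bar>x - y\<bar>"
proof -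
  have "(\<lambda>p. c p * real p * x ^ (p - 1) - c p * real p * y ^ (p - 1)) sums (x * G x - y * G y)"
    using x y by (intro sums_diff mult_G_sums) auto
  then have eq: "x * G x - y * G y = (\<Sum>p. c p * real p * x ^ (p - 1) - c p * real p * y ^ (p - 1))"
    by (rule sums_unique)
  have term_bound: "norm (c p * real p * x ^ (p - 1) - c p * real p * y ^ (p - 1)) \<le>
      c p * real p * (real (p - 1) * (4/5) ^ (p - 2)) * \<bar>x - y\<bar>" for p
  proof -
    have "norm (c p * real p * x ^ (p - 1) - c p * real p * y ^ (p - 1)) =
        c p * real p * \<bar>x ^ (p - 1) - y ^ (p - 1)\<bar>"
      unfolding right_diff_distrib[symmetric] real_norm_def abs_mult using c_nonneg[of p] by simp
    also have "\<dots> \<le> c p * real p * (real (p - 1) * (4/5) ^ (p - 2) * \<bar>x - y\<bar>)"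
      using abs_power_diff_le[OF x y, of "p - 1"] c_nonneg[of p]
      by (intro mult_left_mono) (simp_all add: numeral_2_eq_2)
    finally show ?thesis
      by (simp only: mult.assoc)
  qed
  have "norm (\<Sum>p. c p * real p * x ^ (p - 1) - c p * real p * y ^ (p - 1)) \<le>
      (\<Sum>p. c p * real p * (real (p - 1) * (4/5) ^ (p - 2)) * \<bar>x - y\<bar>)"
    by (rule norm_suminf_le[OF term_bound summable_mult2[OF summable_L_series]])
  also have "\<dots> = L * \<bar>x - y\<bar>"
    unfolding L_def by (rule suminf_mult2[OF summable_L_series, symmetric])
  finally show ?thesis
    unfolding eq by simp
qed

lemma grad_on_cube:
  assumes "\<And>j. j \<in> {1..k} \<Longrightarrow> \<bar>v j \<bullet> x\<bar> \<le> 1"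
  shows "grad x = - (\<Sum>j\<in>{1..k}. (v j \<bullet> x * G (v j \<bullet> x)) *\<^sub>R v j)"
  using grad_term_sums[OF mult_G_sums[OF assms]] by (simp add: grad_eq_suminf sums_unique[symmetric])

lemma overlap_has_derivative:
  assumes j: "j \<in> {1..k}" and "t \<ge> 0"
  shows "((\<lambda>t. v j \<bullet> w t) has_real_derivative (v j \<bullet> w t) * (G (v j \<bullet> w t) - S t))
    (at t within {0..})"
proof -
  let ?g = "grad (w t)"
  have "(w has_vector_derivative - (?g - (w t \<bullet> ?g) *\<^sub>R w t)) (at t within {0..})"
    using ode \<open>t \<ge> 0\<close> by auto
  from bounded_linear.has_vector_derivative[OF bounded_linear_inner_right this, of "v j"]
  have deriv: "((\<lambda>t. v j \<bullet> w t) has_real_derivative v j \<bullet> - (?g - (w t \<bullet> ?g) *\<^sub>R w t))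
      (at t within {0..})"
    by (simp add: has_real_derivative_iff_has_vector_derivative)
  have grad_wt: "?g = - (\<Sum>i\<in>{1..k}. (v i \<bullet> w t * G (v i \<bullet> w t)) *\<^sub>R v i)"
  proof (rule grad_on_cube)
    fix i assume "i \<in> {1..k}"
    then show "\<bar>v i \<bullet> w t\<bar> \<le> 1"
      using abs_inner_v_le[of i "w t"] norm_preserved[OF \<open>t \<ge> 0\<close>] by simp
  qed
  have "v j \<bullet> ?g = - (v j \<bullet> w t * G (v j \<bullet> w t))"
    unfolding grad_wt inner_minus_right
    using inner_v_combination[OF j, of "\<lambda>i. v i \<bullet> w t * G (v i \<bullet> w t)"] by simp
  moreover have "w t \<bullet> ?g = - S t"
    unfolding grad_wt S_def inner_minus_right inner_sum_right inner_scaleR_right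
    by (simp add: inner_commute[of "w t"] power2_eq_square mult.commute mult.left_commute)
  ultimately show ?thesis
    using deriv by (simp add: inner_diff_right algebra_simps)
qed

lemma overlaps_overlap_flow: "overlap_flow K (c P * real P) L (P - 2) k G (\<lambda>j t. v j \<bullet> w t) S"
proof
  show "0 < c P * real P" "1 \<le> P - 2"
    using c_P_pos info_exp_ge_3 by auto
  show "(\<Sum>j\<in>{1..k}. (v j \<bullet> w t)\<^sup>2) \<le> 1" if "t \<ge> 0" for t
    using sum_overlaps_squared_le[of "w t"] norm_preserved[OF that] by simp
  show "S t = (\<Sum>j\<in>{1..k}. (v j \<bullet> w t)\<^sup>2 * G (v j \<bullet> w t))" for t
    by (rule S_def)
qed (fact abs_G_le G_increment G_0_nonneg mult_G_lipschitz overlap_has_derivative)+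

lemma G_even:
  assumes "\<And>x. \<sigma>s (- x) = \<sigma>s x"
  shows "G (- u) = G u"
proof -
  have "(\<lambda>p. c p * real p * (- u) ^ (p - 2)) = (\<lambda>p. c p * real p * u ^ (p - 2))"
  proof
    fix p
    show "c p * real p * (- u) ^ (p - 2) = c p * real p * u ^ (p - 2)"
      using hcoeff_odd_eq_0[of \<sigma>s p, OF assms] by (cases "even p") (auto simp: ccoef_def)
  qed
  then show ?thesis
    unfolding G_def by simp
qed


lemma overlaps_tendsto_positive_case:
  assumes l: "l \<in> {1..k}"
    and pos: "\<forall>j\<in>{1..k}. v j \<bullet> w 0 > 0"
    and top: "\<forall>j\<in>{1..l}. v j \<bullet> w 0 = v 1 \<bullet> w 0"
    and lower: "\<forall>j\<in>{l+1..k}. v j \<bullet> w 0 < v 1 \<bullet> w 0"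
  shows "(\<forall>j\<in>{1..l}. ((\<lambda>t. v j \<bullet> w t) \<longlongrightarrow> 1 / sqrt (real l)) at_top) \<and>
    (\<forall>j\<in>{l+1..k}. ((\<lambda>t. v j \<bullet> w t) \<longlongrightarrow> 0) at_top)"
proof -
  interpret ordered_overlap_flow K "c P * real P" L "P - 2" k G "\<lambda>j t. v j \<bullet> w t" S l "v 1 \<bullet> w 0"
  proof (rule ordered_overlap_flow.intro[OF overlaps_overlap_flow ordered_overlap_flow_axioms.intro])
    show "1 \<le> l" "l \<le> k"
      using l by auto
    then show "0 < v 1 \<bullet> w 0"
      using pos by simp
    show "v j \<bullet> w 0 = v 1 \<bullet> w 0" if "j \<in> {1..l}" for j
      using top that by blast
    show "0 \<le> v j \<bullet> w 0 \<and> v j \<bullet> w 0 < v 1 \<bullet> w 0" if "j \<in> {l+1..k}" for j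
    proof -
      have "j \<in> {1..k}"
        using that \<open>1 \<le> l\<close> by simp
      then have "0 < v j \<bullet> w 0"
        using pos by blast
      moreover have "v j \<bullet> w 0 < v 1 \<bullet> w 0"
        using lower that by blast
      ultimately show ?thesis
        by simp
    qed
  qed
  show ?thesis
    using top_overlap_tendsto lower_overlap_tendsto_0 by blast
qed

definition initial_sign :: "nat \<Rightarrow> real" where
  "initial_sign j = (if v j \<bullet> w 0 < 0 then -1 else 1)"
  \<comment> \<open>not \<open>sgn\<close>: a lower overlap may vanish initially, but the flip must be \<open>\<plusminus>1\<close>\<close>

lemma sign_flipped_ordered_overlap_flow:
  assumes even: "\<forall>x. \<sigma>s (- x) = \<sigma>s x" and l: "l \<in> {1..k}"
    and top: "\<forall>j\<in>{1..l}. \<bar>v j \<bullet> w 0\<bar> = \<bar>v 1 \<bullet> w 0\<bar>"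
    and lower: "\<forall>j\<in>{l+1..k}. \<bar>v j \<bullet> w 0\<bar> < \<bar>v 1 \<bullet> w 0\<bar>"
    and "v 1 \<bullet> w 0 \<noteq> 0"
  shows "ordered_overlap_flow K (c P * real P) L (P - 2) k G
    (\<lambda>j t. initial_sign j * (v j \<bullet> w t)) S l \<bar>v 1 \<bullet> w 0\<bar>"
proof (rule ordered_overlap_flow.intro[OF overlap_flow.sign_flip[OF overlaps_overlap_flow]
    ordered_overlap_flow_axioms.intro])
  have init: "initial_sign j * (v j \<bullet> w 0) = \<bar>v j \<bullet> w 0\<bar>" for j
    by (simp add: initial_sign_def)
  show "G (- u) = G u" for u
    using G_even even by blast
  show "\<bar>initial_sign j\<bar> = 1" for j
    by (simp add: initial_sign_def)
  show "1 \<le> l" "l \<le> k" "0 < \<bar>v 1 \<bullet> w 0\<bar>"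
    using l \<open>v 1 \<bullet> w 0 \<noteq> 0\<close> by auto
  show "initial_sign j * (v j \<bullet> w 0) = \<bar>v 1 \<bullet> w 0\<bar>" if "j \<in> {1..l}" for j
    using top[rule_format, OF that] by (simp add: init)
  show "0 \<le> initial_sign j * (v j \<bullet> w 0) \<and> initial_sign j * (v j \<bullet> w 0) < \<bar>v 1 \<bullet> w 0\<bar>"
    if "j \<in> {l+1..k}" for j
    using lower[rule_format, OF that] by (simp add: init)
qed

lemma overlaps_tendsto_even_case:
  assumes even: "\<forall>x. \<sigma>s (- x) = \<sigma>s x" and l: "l \<in> {1..k}"
    and top: "\<forall>j\<in>{1..l}. \<bar>v j \<bullet> w 0\<bar> = \<bar>v 1 \<bullet> w 0\<bar>"
    and lower: "\<forall>j\<in>{l+1..k}. \<bar>v j \<bullet> w 0\<bar> < \<bar>v 1 \<bullet> w 0\<bar>"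
  shows "(\<forall>j\<in>{1..l}. ((\<lambda>t. v j \<bullet> w t) \<longlongrightarrow> sgn (v j \<bullet> w 0) / sqrt (real l)) at_top) \<and>
    (\<forall>j\<in>{l+1..k}. ((\<lambda>t. v j \<bullet> w t) \<longlongrightarrow> 0) at_top)"
proof (cases "v 1 \<bullet> w 0 = 0")
  case True
  interpret overlap_flow K "c P * real P" L "P - 2" k G "\<lambda>j t. v j \<bullet> w t" S
    by (rule overlaps_overlap_flow)
  have "((\<lambda>t. v j \<bullet> w t) \<longlongrightarrow> sgn (v j \<bullet> w 0) / sqrt (real l)) at_top" if "j \<in> {1..l}" for j
  proof -
    have "j \<in> {1..k}" "v j \<bullet> w 0 = 0"
      using that l top[rule_format, OF that] True by auto
    with zero_overlap_tendsto_0 show ?thesis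
      by simp
  qed
  moreover have "j \<notin> {l+1..k}" for j
    using lower True by (metis abs_ge_zero abs_zero not_le)
  ultimately show ?thesis
    by blast
next
  case False
  interpret ordered_overlap_flow K "c P * real P" L "P - 2" k G
    "\<lambda>j t. initial_sign j * (v j \<bullet> w t)" S l "\<bar>v 1 \<bullet> w 0\<bar>"
    by (rule sign_flipped_ordered_overlap_flow[OF even l top lower False])
  have unflip: "initial_sign j * (initial_sign j * x) = x" for j x
    by (simp add: initial_sign_def)
  have "((\<lambda>t. v j \<bullet> w t) \<longlongrightarrow> sgn (v j \<bullet> w 0) / sqrt (real l)) at_top" if "j \<in> {1..l}" for j
  proof -
    have "v j \<bullet> w 0 \<noteq> 0"
      using top[rule_format, OF that] False by auto
    then have "initial_sign j = sgn (v j \<bullet> w 0)"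
      by (simp add: initial_sign_def sgn_if)
    with tendsto_mult_left[OF top_overlap_tendsto[OF that], of "initial_sign j"] show ?thesis
      unfolding unflip by simp
  qed
  moreover have "((\<lambda>t. v j \<bullet> w t) \<longlongrightarrow> 0) at_top" if "j \<in> {l+1..k}" for j
    using tendsto_mult_left[OF lower_overlap_tendsto_0[OF that], of "initial_sign j"]
    unfolding unflip by simp
  ultimately show ?thesis
    by blast
qed

end

theorem proposition2:
  fixes \<sigma> \<sigma>s :: "real \<Rightarrow> real"
    and k l :: nat
    and v :: "nat \<Rightarrow> real^'d"
    and w :: "real \<Rightarrow> real^'d"
  assumes standing: "standing_assms \<sigma> \<sigma>s"
    and orthonormal: "\<forall>i\<in>{1..k}. \<forall>j\<in>{1..k}. v i \<bullet> v j = (if i = j then 1 else 0)"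
    and ode: "\<forall>t\<ge>0. (w has_vector_derivative
               (- (loss_grad \<sigma> \<sigma>s k v (w t) - (w t \<bullet> loss_grad \<sigma> \<sigma>s k v (w t)) *\<^sub>R w t)))
               (at t within {0..})"
    and unit0: "norm (w 0) = 1"
    and l_range: "l \<in> {1..k}"
  shows
   "((\<forall>j\<in>{1..k}. v j \<bullet> w 0 > 0) \<and>
     (\<forall>j\<in>{1..l}. v j \<bullet> w 0 = v 1 \<bullet> w 0) \<and>
     (\<forall>j\<in>{l+1..k}. v j \<bullet> w 0 < v 1 \<bullet> w 0) \<and>
     info_exp \<sigma>s \<ge> 3
     \<longrightarrow>
     (\<forall>j\<in>{1..l}. ((\<lambda>t. v j \<bullet> w t) \<longlongrightarrow> 1 / sqrt (real l)) at_top) \<and>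
     (\<forall>j\<in>{l+1..k}. ((\<lambda>t. v j \<bullet> w t) \<longlongrightarrow> 0) at_top))
    \<and>
    ((\<forall>x. \<sigma>s (- x) = \<sigma>s x) \<and>
     info_exp \<sigma>s \<ge> 4 \<and>
     (\<forall>j\<in>{1..l}. \<bar>v j \<bullet> w 0\<bar> = \<bar>v 1 \<bullet> w 0\<bar>) \<and>
     (\<forall>j\<in>{l+1..k}. \<bar>v j \<bullet> w 0\<bar> < \<bar>v 1 \<bullet> w 0\<bar>)
     \<longrightarrow>
     (\<forall>j\<in>{1..l}. ((\<lambda>t. v j \<bullet> w t) \<longlongrightarrow> sgn (v j \<bullet> w 0) / sqrt (real l)) at_top) \<and>
     (\<forall>j\<in>{l+1..k}. ((\<lambda>t. v j \<bullet> w t) \<longlongrightarrow> 0) at_top))"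
proof -
  have flow: "spherical_gradient_flow_exponent_3 \<sigma> \<sigma>s k v w" if "3 \<le> info_exp \<sigma>s"
    using standing orthonormal ode unit0 that
    by (intro spherical_gradient_flow_exponent_3.intro spherical_gradient_flow.intro
        spherical_gradient_flow_exponent_3_axioms.intro)
  have flow4: "spherical_gradient_flow_exponent_3 \<sigma> \<sigma>s k v w" if "4 \<le> info_exp \<sigma>s"
    using flow that by simp
  show ?thesis
    using spherical_gradient_flow_exponent_3.overlaps_tendsto_positive_case[OF flow l_range]
      spherical_gradient_flow_exponent_3.overlaps_tendsto_even_case[OF flow4 _ l_range]
    by blast
qed

end
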